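(* Let $X$ be a finite, connected geometric simplicial complex with vertex set $V$, let $q\in[1,\infty)$, and let $f,g: X\to\mathbb{R}$ be functions each obtained from a function on $V$ by extending linearly over simplices. Let $p$ be a balanced probability distribution on $V$. Let $G^{SP}_f=(V,p,D_f)$ and $G^{SP}_g=(V,p,D_g)$ be the shortest-path measure network representations of the merge trees $T_f$, $T_g$. Then \[ d^{GW}_q(G^{SP}_f,G^{SP}_g) \leq \left(|V|^{2/q}+2\right)\|f-g\|_{L^q(p)}. \]
   Context: Merge tree: for $f: X\to\mathbb{R}$, declare $x\sim y$ if $f(x)=f(y)=a$ and $x,y$ lie in the same connected component of $f^{-1}(-\infty,a]$; the merge tree is $T_f = X/\!\sim$, with $f$ descending to $T_f$. Let $\pi_f:V\to T_f$ be the restricted quotient map. The LCA matrix $W_f(v,w)$ is the maximum value of $f$ along the unique geodesic path from $\pi_f(v)$ to $\pi_f(w)$ in $T_f$. The shortest-path matrix $D_f(v,w)$ is the length of the unique geodesic path from $\pi_f(v)$ to $\pi_f(w)$ in $T_f$, where each tree edge between adjacent points has length equal to the absolute difference of their $f$-values; equivalently $D_f(v,w)=2W_f(v,w)-f(v)-f(w)$. A probability distribution $p$ on $V$ is balanced if $p(u)p(v)\le p(w)$ for all $u,v,w\in V$. $\|h\|_{L^q(p)} = (\sum_{v\in V}|h(v)|^q p(v))^{1/q}$. For finite measure networks $G_i=(V_i,p_i,W_i)$, with $\mathcal{C}(p_1,p_2)$ the nonnegative matrices with row sums $p_1$ and column sums $p_2$, $d^{GW}_q(G_1,G_2) = \tfrac12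 \min_{C\in\mathcal{C}(p_1,p_2)} (\sum_{i,j,k,l} |W_1(i,k)-W_2(j,l)|^q C_{i,j}C_{k,l})^{1/q}$. *)

theory Defs
  imports "HOL-Analysis.Analysis"
begin

(* Geometric simplicial complex: a finite family K of simplices in a Euclidean
   space (library notion simplicial_complex).  Its underlying space is \<Union>K,
   its vertex set the 0-simplices. *)
definition cplx_vertices :: "'a::euclidean_space set set \<Rightarrow> 'a set" where
  "cplx_vertices K = {v. {v} \<in> K}"

definition pl_extension :: "'a::euclidean_space set set \<Rightarrow> ('a \<Rightarrow> real) \<Rightarrow> bool" where
  "pl_extension K f \<longleftrightarrow>
     (\<forall>S\<in>K. \<forall>u::'a \<Rightarrow> real.
        (\<forall>c\<in>{c. c extreme_point_of S}. 0 \<le> u c) \<and> (\<Sum>c\<in>{c. c extreme_point_of S}. u c) = 1 \<longrightarrow>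
        f (\<Sum>c\<in>{c. c extreme_point_of S}. u c *\<^sub>R c) = (\<Sum>c\<in>{c. c extreme_point_of S}. u c * f c))"

definition mt_rel :: "'a::euclidean_space set \<Rightarrow> ('a \<Rightarrow> real) \<Rightarrow> 'a \<Rightarrow> 'a \<Rightarrow> bool" where
  "mt_rel X f x y \<longleftrightarrow> x \<in> X \<and> y \<in> X \<and> f x = f y \<and>
     y \<in> connected_component_set {z \<in> X. f z \<le> f x} x"

definition mt_class :: "'a::euclidean_space set \<Rightarrow> ('a \<Rightarrow> real) \<Rightarrow> 'a \<Rightarrow> 'a set" where
  "mt_class X f x = {y. mt_rel X f x y}"

definition mt_points :: "'a::euclidean_space set \<Rightarrow> ('a \<Rightarrow> real) \<Rightarrow> 'a set set" where
  "mt_points X f = mt_class X f ` X"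

definition mt_topology :: "'a::euclidean_space set \<Rightarrow> ('a \<Rightarrow> real) \<Rightarrow> 'a set topology" where
  "mt_topology X f = topology (\<lambda>U. U \<subseteq> mt_points X f \<and>
      openin (top_of_set X) {x \<in> X. mt_class X f x \<in> U})"

definition mt_fun :: "('a \<Rightarrow> real) \<Rightarrow> 'a set \<Rightarrow> real" where
  "mt_fun f c = f (SOME x. x \<in> c)"

definition arc_in :: "'b topology \<Rightarrow> (real \<Rightarrow> 'b) \<Rightarrow> bool" where
  "arc_in T g \<longleftrightarrow> pathin T g \<and> inj_on g {0..1}"

definition mt_geodesic :: "'a::euclidean_space set \<Rightarrow> ('a \<Rightarrow> real) \<Rightarrow> 'a set \<Rightarrow> 'a set \<Rightarrow> 'a set set" where
  "mt_geodesic X f s t = (SOME \<Gamma>. (s = t \<and> \<Gamma> = {s}) \<or>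
      (s \<noteq> t \<and> (\<exists>g. arc_in (mt_topology X f) g \<and> g 0 = s \<and> g 1 = t \<and> \<Gamma> = g ` {0..1})))"

definition lca_matrix :: "'a::euclidean_space set \<Rightarrow> ('a \<Rightarrow> real) \<Rightarrow> 'a \<Rightarrow> 'a \<Rightarrow> real" where
  "lca_matrix X f v w =
     Sup (mt_fun f ` mt_geodesic X f (mt_class X f v) (mt_class X f w))"

definition sp_matrix :: "'a::euclidean_space set \<Rightarrow> ('a \<Rightarrow> real) \<Rightarrow> 'a \<Rightarrow> 'a \<Rightarrow> real" where
  "sp_matrix X f v w = 2 * lca_matrix X f v w - f v - f w"

definition prob_dist :: "'v set \<Rightarrow> ('v \<Rightarrow> real) \<Rightarrow> bool" where
  "prob_dist V p \<longleftrightarrow> (\<forall>v\<in>V. 0 \<le> p v) \<and> (\<Sum>v\<in>V. p v) = 1"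

definition balanced :: "'v set \<Rightarrow> ('v \<Rightarrow> real) \<Rightarrow> bool" where
  "balanced V p \<longleftrightarrow> (\<forall>u\<in>V. \<forall>v\<in>V. \<forall>w\<in>V. p u * p v \<le> p w)"

definition Lq_norm :: "real \<Rightarrow> 'v set \<Rightarrow> ('v \<Rightarrow> real) \<Rightarrow> ('v \<Rightarrow> real) \<Rightarrow> real" where
  "Lq_norm q V p h = (\<Sum>v\<in>V. \<bar>h v\<bar> powr q * p v) powr (1 / q)"

definition couplings :: "'v set \<Rightarrow> ('v \<Rightarrow> real) \<Rightarrow> 'w set \<Rightarrow> ('w \<Rightarrow> real) \<Rightarrow> ('v \<Rightarrow> 'w \<Rightarrow> real) set" where
  "couplings V1 p1 V2 p2 = {C. (\<forall>i\<in>V1. \<forall>j\<in>V2. 0 \<le> C i j) \<and>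
      (\<forall>i\<in>V1. (\<Sum>j\<in>V2. C i j) = p1 i) \<and> (\<forall>j\<in>V2. (\<Sum>i\<in>V1. C i j) = p2 j)}"

(* Gromov-Wasserstein q-distance between finite measure networks (V1,p1,W1), (V2,p2,W2);
   the minimum over the compact set of couplings is written as an infimum *)
definition gw_dist :: "real \<Rightarrow> 'v set \<Rightarrow> ('v \<Rightarrow> real) \<Rightarrow> ('v \<Rightarrow> 'v \<Rightarrow> real)
    \<Rightarrow> 'w set \<Rightarrow> ('w \<Rightarrow> real) \<Rightarrow> ('w \<Rightarrow> 'w \<Rightarrow> real) \<Rightarrow> real" where
  "gw_dist q V1 p1 W1 V2 p2 W2 = 1 / 2 * Inf ((\<lambda>C.
      (\<Sum>i\<in>V1. \<Sum>j\<in>V2. \<Sum>k\<in>V1. \<Sum>l\<in>V2. \<bar>W1 i k - W2 j l\<bar> powr q * C i j * C k l) powr (1 / q))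
      ` couplings V1 p1 V2 p2)"

end

theory Submission
  imports Defs
begin

text \<open>The maximum \<open>W_f(v, w)\<close> of \<open>f\<close> on the geodesic between two vertices is their merge
  height, the least \<open>b\<close> for which \<open>v\<close> and \<open>w\<close> lie in one component of \<open>{f \<le> b}\<close>: an arc
  between them in the merge tree cannot avoid the point where their components merge, and the path
  running straight up to that point and down again stays below it. Merge heights are 1-Lipschitz
  in the sup norm, so \<open>|D_f(v, w) - D_g(v, w)| \<le> 2M + |f v - g v| + |f w - g w|\<close> with \<open>M\<close> the
  sup distance, which for piecewise linear functions is attained at a vertex. The diagonal coupling
  and Minkowski's inequality bound the Gromov--Wasserstein distance by \<open>M + \<parallel>f - g\<parallel>\<close>, and
  balancedness gives every vertex weight at least \<open>1 / |V|\<^sup>2\<close>, hence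
  \<open>M \<le> |V|\<^bsup>2/q\<^esup> \<parallel>f - g\<parallel>\<close>.\<close>

section \<open>Weighted \<open>L\<^sup>q\<close> norms\<close>

lemma convex_on_powr_nonneg:
  assumes "1 \<le> q"
  shows "convex_on {0..} (\<lambda>x::real. x powr q)"
proof (rule convex_onI)
  fix t x y :: real
  assume t: "0 < t" "t < 1" and x: "x \<in> {0..}" and y: "y \<in> {0..}"
  have scale: "(s * z) powr q \<le> s * z powr q" if "0 < s" "s \<le> 1" "0 \<le> z" for s z
    using powr_le_one_le[OF that(1,2) assms] that(3)
    by (simp add: powr_mult that(1) less_imp_le mult_right_mono)
  show "((1 - t) *\<^sub>R x + t *\<^sub>R y) powr q \<le> (1 - t) * x powr q + t * y powr q"
  proof (cases "x = 0 \<or> y = 0")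
    case False
    then show ?thesis using convex_onD[OF powr_convex[OF assms], of t x y] t x y by auto
  next
    case True
    then show ?thesis using scale[of t y] scale[of "1 - t" x] t x y by auto
  qed
qed (simp add: convex_real_interval)

lemma Lq_norm_nonneg: "0 \<le> Lq_norm q I w a"
  by (simp add: Lq_norm_def)

lemma Lq_norm_powr:
  assumes "\<And>i. i \<in> I \<Longrightarrow> 0 \<le> w i" and "0 < q"
  shows "Lq_norm q I w a powr q = (\<Sum>i\<in>I. \<bar>a i\<bar> powr q * w i)"
  using assms by (simp add: Lq_norm_def powr_powr sum_nonneg)

lemma Lq_norm_mono:
  assumes "\<And>i. i \<in> I \<Longrightarrow> 0 \<le> w i" and "\<And>i. i \<in> I \<Longrightarrow> \<bar>a i\<bar> \<le> \<bar>b i\<bar>" and "0 < q"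
  shows "Lq_norm q I w a \<le> Lq_norm q I w b"
  unfolding Lq_norm_def using assms
  by (intro powr_mono2 sum_mono mult_right_mono sum_nonneg) auto

lemma Lq_norm_const:
  assumes "(\<Sum>i\<in>I. w i) = 1" and "0 < q"
  shows "Lq_norm q I w (\<lambda>_. c) = \<bar>c\<bar>"
  using assms by (simp add: Lq_norm_def flip: sum_distrib_left) (simp add: powr_powr)

lemma Lq_norm_add_null:
  assumes "finite I" and w: "\<And>i. i \<in> I \<Longrightarrow> 0 \<le> w i" and "0 < q" and "Lq_norm q I w a = 0"
  shows "Lq_norm q I w (\<lambda>i. a i + b i) = Lq_norm q I w b"
proof -
  have "(\<Sum>i\<in>I. \<bar>a i\<bar> powr q * w i) = 0"
    using Lq_norm_powr[of I w q a] w assms(3,4) by simp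
  then have "\<forall>i\<in>I. \<bar>a i\<bar> powr q * w i = 0"
    using sum_nonneg_eq_0_iff[OF \<open>finite I\<close>, of "\<lambda>i. \<bar>a i\<bar> powr q * w i"] w by auto
  then have "\<forall>i\<in>I. a i = 0 \<or> w i = 0" by auto
  then show ?thesis unfolding Lq_norm_def by (intro arg_cong[where f="\<lambda>s. s powr _"] sum.cong) auto
qed

lemma abs_add_powr_le_convex_combination:
  fixes x y A B q :: real
  assumes "0 < A" "0 < B" and q: "1 \<le> q"
  shows "\<bar>x + y\<bar> powr q
    \<le> (A + B) powr q * (A / (A + B) * (\<bar>x\<bar> / A) powr q + B / (A + B) * (\<bar>y\<bar> / B) powr q)"
proof -
  define t where "t = A / (A + B)"
  have t: "0 \<le> t" "t \<le> 1" "1 - t = B / (A + B)" using assms by (auto simp: t_def field_simps)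
  have "(A + B) * (t * (\<bar>x\<bar> / A) + (1 - t) * (\<bar>y\<bar> / B))
      = ((A + B) * t) * (\<bar>x\<bar> / A) + ((A + B) * (1 - t)) * (\<bar>y\<bar> / B)"
    by (simp only: distrib_left mult.assoc)
  also have "\<dots> = \<bar>x\<bar> + \<bar>y\<bar>" using assms unfolding t by (simp add: t_def)
  finally have split: "\<bar>x\<bar> + \<bar>y\<bar> = (A + B) * (t * (\<bar>x\<bar> / A) + (1 - t) * (\<bar>y\<bar> / B))" ..
  have "\<bar>x + y\<bar> powr q \<le> (\<bar>x\<bar> + \<bar>y\<bar>) powr q"
    using q by (intro powr_mono2) auto
  also have "\<dots> = (A + B) powr q * (t * (\<bar>x\<bar> / A) + (1 - t) * (\<bar>y\<bar> / B)) powr q"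
    unfolding split using assms t by (simp add: powr_mult)
  also have "\<dots> \<le> (A + B) powr q * (t * (\<bar>x\<bar> / A) powr q + (1 - t) * (\<bar>y\<bar> / B) powr q)"
    using convex_onD[OF convex_on_powr_nonneg[OF q], of "1 - t" "\<bar>x\<bar> / A" "\<bar>y\<bar> / B"] t(1,2) assms
    by (intro mult_left_mono) auto
  finally show ?thesis unfolding t(3) by (simp add: t_def)
qed

lemma sum_normalized_powr_eq_one:
  assumes "\<And>i. i \<in> I \<Longrightarrow> 0 \<le> w i" and "0 < q" and "0 < Lq_norm q I w c"
  shows "(\<Sum>i\<in>I. (\<bar>c i\<bar> / Lq_norm q I w c) powr q * w i) = 1"
proof -
  have "(\<Sum>i\<in>I. (\<bar>c i\<bar> / Lq_norm q I w c) powr q * w i)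
      = (\<Sum>i\<in>I. \<bar>c i\<bar> powr q * w i) / Lq_norm q I w c powr q"
    using assms by (simp add: powr_divide sum_divide_distrib)
  also have "\<dots> = Lq_norm q I w c powr q / Lq_norm q I w c powr q"
    using Lq_norm_powr[of I w q c] assms(1,2) by simp
  also have "\<dots> = 1" using assms(3) by simp
  finally show ?thesis .
qed

text \<open>Minkowski's inequality: summing \<open>abs_add_powr_le_convex_combination\<close>, with \<open>A\<close> and \<open>B\<close>
  the norms of \<open>a\<close> and \<open>b\<close>, against \<open>w\<close>.\<close>
lemma Lq_norm_triangle:
  assumes "finite I" and w: "\<And>i. i \<in> I \<Longrightarrow> 0 \<le> w i" and q: "1 \<le> q"
  shows "Lq_norm q I w (\<lambda>i. a i + b i) \<le> Lq_norm q I w a + Lq_norm q I w b"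
proof -
  define A where "A = Lq_norm q I w a"
  define B where "B = Lq_norm q I w b"
  have q0: "0 < q" using q by simp
  consider "A = 0" | "B = 0" | "0 < A" "0 < B"
    using Lq_norm_nonneg unfolding A_def B_def by (metis less_eq_real_def)
  then show ?thesis
  proof cases
    case 1
    then show ?thesis using Lq_norm_add_null[OF assms(1) w q0] unfolding A_def by simp
  next
    case 2
    then show ?thesis
      using Lq_norm_add_null[OF assms(1) w q0, where a=b and b=a] unfolding B_def by (simp add: add.commute)
  next
    case 3
    have "Lq_norm q I w (\<lambda>i. a i + b i) powr q = (\<Sum>i\<in>I. \<bar>a i + b i\<bar> powr q * w i)"
      by (rule Lq_norm_powr[OF w q0])
    also have "\<dots> \<le> (\<Sum>i\<in>I. (A + B) powr q *
        (A / (A + B) * ((\<bar>a i\<bar> / A) powr q * w i) + B / (A + B) * ((\<bar>b i\<bar> / B) powr q * w i)))"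
    proof (rule sum_mono)
      fix i assume "i \<in> I"
      then show "\<bar>a i + b i\<bar> powr q * w i \<le> (A + B) powr q *
          (A / (A + B) * ((\<bar>a i\<bar> / A) powr q * w i) + B / (A + B) * ((\<bar>b i\<bar> / B) powr q * w i))"
        using mult_right_mono[OF abs_add_powr_le_convex_combination[OF 3 q, of "a i" "b i"] w]
        by (simp add: algebra_simps)
    qed
    also have "\<dots> = (A + B) powr q * (A / (A + B) * (\<Sum>i\<in>I. (\<bar>a i\<bar> / A) powr q * w i)
        + B / (A + B) * (\<Sum>i\<in>I. (\<bar>b i\<bar> / B) powr q * w i))"
      by (simp only: sum.distrib flip: sum_distrib_left)
    also have "\<dots> = (A + B) powr q"
      using sum_normalized_powr_eq_one[of I w q a, OF w q0 3(1)[unfolded A_def], folded A_def]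
        sum_normalized_powr_eq_one[of I w q b, OF w q0 3(2)[unfolded B_def], folded B_def] 3
      by (simp add: add_divide_distrib[symmetric])
    finally have "Lq_norm q I w (\<lambda>i. a i + b i) powr q \<le> (A + B) powr q" .
    then show ?thesis
      using powr_less_mono2[OF q0, of "A + B"] 3 unfolding A_def B_def
      by (meson not_le less_imp_le add_nonneg_nonneg)
  qed
qed

section \<open>The Gromov--Wasserstein distance\<close>

lemma Lq_norm_product_fst:
  assumes "(\<Sum>v\<in>V. p v) = 1"
  shows "Lq_norm q (V \<times> V) (\<lambda>x. p (fst x) * p (snd x)) (\<lambda>x. h (fst x)) = Lq_norm q V p h"
proof -
  have "(\<Sum>x\<in>V \<times> V. \<bar>h (fst x)\<bar> powr q * (p (fst x) * p (snd x)))
      = (\<Sum>i\<in>V. \<bar>h i\<bar> powr q * p i * (\<Sum>k\<in>V. p k))"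
    by (simp add: sum.cartesian_product' sum_distrib_left mult.assoc)
  then show ?thesis using assms by (simp add: Lq_norm_def)
qed

lemma Lq_norm_product_snd:
  assumes "(\<Sum>v\<in>V. p v) = 1"
  shows "Lq_norm q (V \<times> V) (\<lambda>x. p (fst x) * p (snd x)) (\<lambda>x. h (snd x)) = Lq_norm q V p h"
proof -
  have "(\<Sum>x\<in>V \<times> V. \<bar>h (snd x)\<bar> powr q * (p (fst x) * p (snd x)))
      = (\<Sum>i\<in>V. p i) * (\<Sum>k\<in>V. \<bar>h k\<bar> powr q * p k)"
    by (simp add: sum.cartesian_product' sum_product) (simp add: algebra_simps)
  then show ?thesis using assms by (simp add: Lq_norm_def)
qed

text \<open>The bound comes from the diagonal coupling \<open>C i j = p i\<close> if \<open>i = j\<close>, else \<open>0\<close>.\<close>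
lemma gw_dist_le_diagonal_coupling:
  assumes "finite V" and "prob_dist V p"
  shows "gw_dist q V p Da V p Db
    \<le> 1 / 2 * Lq_norm q (V \<times> V) (\<lambda>x. p (fst x) * p (snd x)) (\<lambda>x. Da (fst x) (snd x) - Db (fst x) (snd x))"
proof -
  define C where "C = (\<lambda>i j. if i = j then p i else (0::real))"
  define cost where "cost = (\<lambda>C. (\<Sum>i\<in>V. \<Sum>j\<in>V. \<Sum>k\<in>V. \<Sum>l\<in>V.
        \<bar>Da i k - Db j l\<bar> powr q * C i j * C k l) powr (1 / q))"
  have "C \<in> couplings V p V p"
    using assms unfolding couplings_def prob_dist_def C_def by (auto simp: sum.delta sum.delta')
  moreover have "bdd_below (cost ` couplings V p V p)"
    unfolding cost_def by (rule bdd_belowI[of _ 0]) auto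
  ultimately have "gw_dist q V p Da V p Db \<le> 1 / 2 * cost C"
    unfolding gw_dist_def cost_def[symmetric] by (simp add: cInf_lower)
  also have "cost C = (\<Sum>i\<in>V. \<Sum>k\<in>V. \<bar>Da i k - Db i k\<bar> powr q * (p i * p k)) powr (1 / q)"
  proof -
    have sum_if: "(\<Sum>x\<in>V. if P then g x else 0) = (if P then sum g V else 0)" for P and g :: "'a \<Rightarrow> real"
      by simp
    show ?thesis
      unfolding cost_def C_def using \<open>finite V\<close>
      by (simp add: if_distrib[of "\<lambda>c. _ * c"] if_distrib[of "\<lambda>c. c * _"] sum_if sum.delta' mult.assoc
          cong: if_cong)
  qed
  also have "\<dots> = Lq_norm q (V \<times> V) (\<lambda>x. p (fst x) * p (snd x)) (\<lambda>x. Da (fst x) (snd x) - Db (fst x) (snd x))"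
    unfolding Lq_norm_def by (simp add: sum.cartesian_product case_prod_beta)
  finally show ?thesis .
qed

text \<open>Balancedness forces every weight up to the square of the largest one, which is at least
  \<open>1 / card V\<close>.\<close>
lemma balanced_weight_ge:
  assumes "finite V" and p: "prob_dist V p" "balanced V p" and "u \<in> V"
  shows "1 / real (card V) ^ 2 \<le> p u"
proof -
  have "Max (p ` V) \<in> p ` V" using \<open>finite V\<close> \<open>u \<in> V\<close> by (intro Max_in) auto
  then obtain j where j: "j \<in> V" "p j = Max (p ` V)" by auto
  then have jmax: "p i \<le> p j" if "i \<in> V" for i using \<open>finite V\<close> that by simp
  have card: "0 < real (card V)" using \<open>finite V\<close> \<open>u \<in> V\<close> card_gt_0_iff by fastforce
  have "1 = (\<Sum>i\<in>V. p i)" using p by (simp add: prob_dist_def)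
  also have "\<dots> \<le> real (card V) * p j" using jmax sum_bounded_above[of V p "p j"] by simp
  finally have "1 / real (card V) \<le> p j" using card by (simp add: field_simps)
  then have "(1 / real (card V)) * (1 / real (card V)) \<le> p j * p j"
    using card p(1) j(1) by (intro mult_mono) (auto simp: prob_dist_def)
  also have "\<dots> \<le> p u" using p(2) j(1) \<open>u \<in> V\<close> by (simp add: balanced_def)
  finally show ?thesis by (simp add: power2_eq_square)
qed

lemma abs_le_balanced_Lq_norm:
  assumes "finite V" and p: "prob_dist V p" "balanced V p" and "u \<in> V" and "0 < q"
  shows "\<bar>h u\<bar> \<le> real (card V) powr (2 / q) * Lq_norm q V p h"
proof -
  define N where "N = Lq_norm q V p h"
  have p0: "\<And>v. v \<in> V \<Longrightarrow> 0 \<le> p v" using p by (simp add: prob_dist_def)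
  have card: "0 < real (card V)" using assms card_gt_0_iff by fastforce
  have "\<bar>h u\<bar> powr q * p u \<le> (\<Sum>v\<in>V. \<bar>h v\<bar> powr q * p v)"
    using p0 assms by (intro member_le_sum) auto
  also have "\<dots> = N powr q" unfolding N_def using Lq_norm_powr p0 \<open>0 < q\<close> by metis
  finally have "\<bar>h u\<bar> powr q * (1 / real (card V) ^ 2) \<le> N powr q"
    using balanced_weight_ge[OF assms(1-4)] by (meson mult_left_mono order_trans powr_ge_zero)
  then have "\<bar>h u\<bar> powr q \<le> (real (card V) powr (2 / q) * N) powr q"
    using card \<open>0 < q\<close> N_def Lq_norm_nonneg
    by (simp add: powr_mult powr_powr field_simps powr_numeral)
  then show ?thesis
    using powr_less_mono2[OF \<open>0 < q\<close>] N_def Lq_norm_nonneg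
    by (meson not_le less_imp_le mult_nonneg_nonneg powr_ge_zero abs_ge_zero)
qed

lemma Lq_norm_product_const_add_le:
  assumes "finite V" and p: "prob_dist V p" and q: "1 \<le> q"
  shows "Lq_norm q (V \<times> V) (\<lambda>x. p (fst x) * p (snd x)) (\<lambda>x. c + (\<bar>h (fst x)\<bar> + \<bar>h (snd x)\<bar>))
    \<le> \<bar>c\<bar> + 2 * Lq_norm q V p h"
proof -
  define w where "w = (\<lambda>x. p (fst x) * p (snd x))"
  have w0: "\<And>x. x \<in> V \<times> V \<Longrightarrow> 0 \<le> w x" and w1: "(\<Sum>x\<in>V \<times> V. w x) = 1"
    using p by (auto simp: w_def prob_dist_def sum.cartesian_product' simp flip: sum_distrib_left)
  have p1: "(\<Sum>v\<in>V. p v) = 1" using p by (simp add: prob_dist_def)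
  have "Lq_norm q (V \<times> V) w (\<lambda>x. c + (\<bar>h (fst x)\<bar> + \<bar>h (snd x)\<bar>))
      \<le> Lq_norm q (V \<times> V) w (\<lambda>_. c) + Lq_norm q (V \<times> V) w (\<lambda>x. \<bar>h (fst x)\<bar> + \<bar>h (snd x)\<bar>)"
    using assms(1) w0 q by (intro Lq_norm_triangle) auto
  also have "\<dots> \<le> Lq_norm q (V \<times> V) w (\<lambda>_. c)
      + (Lq_norm q (V \<times> V) w (\<lambda>x. \<bar>h (fst x)\<bar>) + Lq_norm q (V \<times> V) w (\<lambda>x. \<bar>h (snd x)\<bar>))"
    using assms(1) w0 q by (intro add_left_mono Lq_norm_triangle) auto
  also have "\<dots> = \<bar>c\<bar> + 2 * Lq_norm q V p h"
    using Lq_norm_const[OF w1, of q c] Lq_norm_product_fst[OF p1, of q "\<lambda>v. \<bar>h v\<bar>"]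
      Lq_norm_product_snd[OF p1, of q "\<lambda>v. \<bar>h v\<bar>"] q
    by (simp add: w_def Lq_norm_def)
  finally show ?thesis unfolding w_def .
qed

lemma gw_dist_le_of_distortion_bound:
  assumes "finite V" and p: "prob_dist V p" "balanced V p" and q: "1 \<le> q" and "u \<in> V"
    and D: "\<And>i k. i \<in> V \<Longrightarrow> k \<in> V \<Longrightarrow> \<bar>Da i k - Db i k\<bar> \<le> 2 * \<bar>h u\<bar> + \<bar>h i\<bar> + \<bar>h k\<bar>"
  shows "gw_dist q V p Da V p Db \<le> (real (card V) powr (2 / q) + 2) * Lq_norm q V p h"
proof -
  define w where "w = (\<lambda>x. p (fst x) * p (snd x))"
  have "gw_dist q V p Da V p Db
      \<le> 1 / 2 * Lq_norm q (V \<times> V) w (\<lambda>x. Da (fst x) (snd x) - Db (fst x) (snd x))"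
    unfolding w_def by (rule gw_dist_le_diagonal_coupling[OF \<open>finite V\<close> p(1)])
  also have "\<dots> \<le> 1 / 2 * Lq_norm q (V \<times> V) w (\<lambda>x. 2 * \<bar>h u\<bar> + (\<bar>h (fst x)\<bar> + \<bar>h (snd x)\<bar>))"
    using D p(1) q by (intro mult_left_mono Lq_norm_mono) (auto simp: w_def prob_dist_def add.assoc)
  also have "\<dots> \<le> 1 / 2 * (2 * \<bar>h u\<bar> + 2 * Lq_norm q V p h)"
    using Lq_norm_product_const_add_le[OF assms(1) p(1) q, of "2 * \<bar>h u\<bar>" h] by (simp add: w_def)
  also have "\<dots> \<le> (real (card V) powr (2 / q) + 2) * Lq_norm q V p h"
    using abs_le_balanced_Lq_norm[OF assms(1-3) \<open>u \<in> V\<close>, of q h] q Lq_norm_nonneg[of q V p h]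
    by (simp add: algebra_simps)
  finally show ?thesis .
qed

section \<open>Piecewise linear functions on simplicial complexes\<close>

lemma simplicial_complex_simplexE:
  assumes K: "simplicial_complex K" and S: "S \<in> K"
  obtains C where "finite C" "\<not> affine_dependent C" "S = convex hull C"
    "{c. c extreme_point_of S} = C" "C \<subseteq> cplx_vertices K"
proof -
  obtain n where "n simplex S" using assms unfolding simplicial_complex_def by blast
  then obtain C where C: "\<not> affine_dependent C" "S = convex hull C" unfolding simplex_def by blast
  have ext: "{c. c extreme_point_of S} = C"
    using extreme_point_of_convex_hull_affine_independent[OF C(1)] C(2) by auto
  have "{c} \<in> K" if "c \<in> C" for c
    using K S face_of_singleton[of c S] ext that unfolding simplicial_complex_def by blast
  then have "C \<subseteq> cplx_vertices K" by (auto simp: cplx_vertices_def)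
  then show ?thesis using that C ext aff_independent_finite by blast
qed

lemma compact_convex_simplex:
  assumes "simplicial_complex K" and "S \<in> K"
  shows "compact S" and "convex S"
  using simplicial_complex_simplexE[OF assms]
  by (metis compact_convex_hull finite_imp_compact, metis convex_convex_hull)

lemma finite_cplx_vertices:
  assumes "simplicial_complex K"
  shows "finite (cplx_vertices K)"
proof -
  have "(\<lambda>v. {v}) ` cplx_vertices K \<subseteq> K" by (auto simp: cplx_vertices_def)
  then have "finite ((\<lambda>v. {v}) ` cplx_vertices K)"
    using assms finite_subset unfolding simplicial_complex_def by blast
  then show ?thesis by (rule finite_imageD) (simp add: inj_on_def)
qed

lemma cplx_vertices_subset: "cplx_vertices K \<subseteq> \<Union>K"
  by (auto simp: cplx_vertices_def)

lemma pl_extension_convex_combination: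
  assumes "pl_extension K f" and "S \<in> K" and "{c. c extreme_point_of S} = C"
    and "\<forall>c\<in>C. 0 \<le> u c" and "sum u C = 1"
  shows "f (\<Sum>c\<in>C. u c *\<^sub>R c) = (\<Sum>c\<in>C. u c * f c)"
  using assms unfolding pl_extension_def by blast

lemma affine_interpolation:
  fixes \<phi> :: "'a::euclidean_space \<Rightarrow> real"
  assumes "\<not> affine_dependent C"
  obtains l a where "linear l" "\<And>c. c \<in> C \<Longrightarrow> \<phi> c = a + l c"
proof (cases "C = {}")
  case True
  then show ?thesis using that[of "\<lambda>_. 0"] by (simp add: linear_zero)
next
  case False
  then obtain c0 where c0: "c0 \<in> C" by auto
  define B where "B = (\<lambda>x. -c0 + x) ` (C - {c0})"
  have "insert c0 (C - {c0}) = C" using c0 by auto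
  then have "independent B"
    using affine_dependent_iff_dependent[of c0 "C - {c0}"] assms unfolding B_def by auto
  then obtain l where l: "linear l" "\<And>y. y \<in> B \<Longrightarrow> l y = \<phi> (c0 + y) - \<phi> c0"
    using linear_independent_extend[of B "\<lambda>y. \<phi> (c0 + y) - \<phi> c0"] by auto
  have "\<phi> c = (\<phi> c0 - l c0) + l c" if "c \<in> C" for c
  proof (cases "c = c0")
    case False
    then have "\<phi> c - \<phi> c0 = l (c - c0)" using l(2)[of "-c0 + c"] that by (auto simp: B_def)
    then show ?thesis using linear_diff[OF l(1)] by simp
  qed simp
  then show ?thesis using that l(1) by blast
qed

lemma pl_extension_affine_on_simplex:
  assumes K: "simplicial_complex K" and pl: "pl_extension K f" and S: "S \<in> K"
  obtains l a where "linear l" "\<And>x. x \<in> S \<Longrightarrow> f x = a + l x"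
proof -
  obtain C where C: "finite C" "\<not> affine_dependent C" "S = convex hull C" "{c. c extreme_point_of S} = C"
    using simplicial_complex_simplexE[OF K S] by blast
  obtain l a where l: "linear l" "\<And>c. c \<in> C \<Longrightarrow> f c = a + l c"
    using affine_interpolation[OF C(2)] by blast
  have "f x = a + l x" if x: "x \<in> S" for x
  proof -
    obtain u where u: "\<forall>c\<in>C. 0 \<le> u c" "sum u C = 1" "x = (\<Sum>c\<in>C. u c *\<^sub>R c)"
      using x C(3) convex_hull_finite[OF C(1)] by auto
    have "f x = (\<Sum>c\<in>C. u c * (a + l c))"
      using pl_extension_convex_combination[OF pl S C(4) u(1,2)] l(2) u(3) by simp
    also have "\<dots> = a + l x"
      using u by (simp add: distrib_left sum.distrib linear_sum[OF l(1)] linear_scale[OF l(1)]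
          flip: sum_distrib_right)
    finally show ?thesis .
  qed
  then show ?thesis using that l(1) by blast
qed

lemma pl_extension_diff_le_vertex_bound:
  assumes K: "simplicial_complex K" and plf: "pl_extension K f" and plg: "pl_extension K g"
    and M: "\<And>c. c \<in> cplx_vertices K \<Longrightarrow> \<bar>f c - g c\<bar> \<le> M" and x: "x \<in> \<Union>K"
  shows "\<bar>f x - g x\<bar> \<le> M"
proof -
  obtain S where S: "S \<in> K" "x \<in> S" using x by auto
  obtain C where C: "finite C" "S = convex hull C" "{c. c extreme_point_of S} = C" "C \<subseteq> cplx_vertices K"
    using simplicial_complex_simplexE[OF K S(1)] by blast
  obtain u where u: "\<forall>c\<in>C. 0 \<le> u c" "sum u C = 1" "x = (\<Sum>c\<in>C. u c *\<^sub>R c)"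
    using S(2) C(2) convex_hull_finite[OF C(1)] by auto
  have "\<bar>f x - g x\<bar> = \<bar>\<Sum>c\<in>C. u c * (f c - g c)\<bar>"
    using pl_extension_convex_combination[OF plf S(1) C(3) u(1,2)]
      pl_extension_convex_combination[OF plg S(1) C(3) u(1,2)] u(3)
    by (simp add: right_diff_distrib sum_subtractf)
  also have "\<dots> \<le> (\<Sum>c\<in>C. u c * M)"
    using u(1) M C(4) by (intro order_trans[OF sum_abs] sum_mono) (auto simp: abs_mult intro: mult_left_mono)
  also have "\<dots> = M" using u(2) by (simp flip: sum_distrib_right)
  finally show ?thesis .
qed

lemma compact_simplicial_complex:
  assumes "simplicial_complex K"
  shows "compact (\<Union>K)"
  using assms compact_convex_simplex(1)[OF assms] unfolding simplicial_complex_def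
  by (intro compact_Union) auto

lemma closed_convex_simplex_sublevel:
  assumes K: "simplicial_complex K" and pl: "pl_extension K f" and S: "S \<in> K"
  shows "closed {y\<in>S. f y \<le> b}" and "convex {y\<in>S. f y \<le> b}"
proof -
  obtain l a where l: "linear l" "\<And>x. x \<in> S \<Longrightarrow> f x = a + l x"
    using pl_extension_affine_on_simplex[OF K pl S] by blast
  have eq: "{y\<in>S. f y \<le> b} = l -` {..b - a} \<inter> S" using l(2) by auto
  have "continuous_on UNIV l" using l(1) linear_continuous_on linear_conv_bounded_linear by blast
  then show "closed {y\<in>S. f y \<le> b}" unfolding eq
    using compact_convex_simplex(1)[OF K S]
    by (intro closed_vimage_Int[OF closed_atMost] compact_imp_closed) (auto intro: continuous_on_subset)
  show "convex {y\<in>S. f y \<le> b}" unfolding eq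
    using compact_convex_simplex(2)[OF K S] l(1) by (intro convex_Int convex_linear_vimage) auto
qed

lemma continuous_on_pl_extension:
  assumes K: "simplicial_complex K" and pl: "pl_extension K f"
  shows "continuous_on (\<Union>K) f"
proof -
  have "continuous_on (\<Union>S\<in>K. S) f"
  proof (rule continuous_on_closed_Union)
    show "finite K" using K unfolding simplicial_complex_def by auto
  next
    fix S assume S: "S \<in> K"
    show "closed S" using compact_convex_simplex(1)[OF K S] by (rule compact_imp_closed)
    obtain l a where l: "linear l" "\<And>x. x \<in> S \<Longrightarrow> f x = a + l x"
      using pl_extension_affine_on_simplex[OF K pl S] by blast
    have "continuous_on S l" using l(1) linear_continuous_on linear_conv_bounded_linear by blast
    then have "continuous_on S (\<lambda>x. a + l x)" by (intro continuous_on_add continuous_on_const)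
    then show "continuous_on S f" using l(2) continuous_on_cong by metis
  qed
  then show ?thesis by simp
qed

text \<open>Each simplex contributes a connected closed piece of the sublevel set, which lies inside or
  outside a given component; the finitely many pieces outside it cover its complement.\<close>
lemma closed_sublevel_diff_component:
  assumes K: "simplicial_complex K" and pl: "pl_extension K f"
  shows "closed ({y\<in>\<Union>K. f y \<le> b} - connected_component_set {y\<in>\<Union>K. f y \<le> b} x)"
proof -
  define Xb where "Xb = {y\<in>\<Union>K. f y \<le> b}"
  define A where "A = connected_component_set Xb x"
  define P where "P = (\<lambda>S. {y\<in>S. f y \<le> b})"
  have piece: "P S \<inter> A = {}" if "S \<in> K" "y \<in> P S" "y \<notin> A" for S y
  proof (rule ccontr)
    assume "P S \<inter> A \<noteq> {}"
    then obtain z where z: "z \<in> P S" "z \<in> A" by blast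
    have "P S \<subseteq> Xb" using that(1) by (auto simp: P_def Xb_def)
    moreover have "connected (P S)"
      unfolding P_def by (rule convex_connected[OF closed_convex_simplex_sublevel(2)[OF K pl that(1)]])
    ultimately have "P S \<subseteq> connected_component_set Xb z"
      using z(1) by (intro connected_component_maximal)
    then show False
      using that(2,3) z(2) connected_component_eq unfolding A_def by blast
  qed
  have "Xb - A = \<Union>(P ` {S\<in>K. P S \<inter> A = {}})"
  proof (intro equalityI subsetI)
    fix y assume y: "y \<in> Xb - A"
    then obtain S where "S \<in> K" "y \<in> P S" by (auto simp: Xb_def P_def)
    with y show "y \<in> \<Union>(P ` {S\<in>K. P S \<inter> A = {}})" using piece by blast
  qed (auto simp: Xb_def P_def)
  moreover have "closed (\<Union>(P ` {S\<in>K. P S \<inter> A = {}}))"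
  proof (rule closed_Union)
    show "finite (P ` {S\<in>K. P S \<inter> A = {}})" using K unfolding simplicial_complex_def by simp
    show "\<forall>T\<in>P ` {S\<in>K. P S \<inter> A = {}}. closed T"
      using closed_convex_simplex_sublevel(1)[OF K pl] unfolding P_def by blast
  qed
  ultimately show ?thesis unfolding Xb_def A_def by simp
qed

section \<open>Merge trees\<close>

definition merge_height :: "'a::euclidean_space set \<Rightarrow> ('a \<Rightarrow> real) \<Rightarrow> 'a \<Rightarrow> 'a \<Rightarrow> real" where
  "merge_height X f v w = Inf {b. w \<in> connected_component_set {y\<in>X. f y \<le> b} v}"

text \<open>The last assumption says that each component of a sublevel set is relatively open in it.\<close>
locale merge_tree_space =
  fixes X :: "'a::euclidean_space set" and f :: "'a \<Rightarrow> real"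
  assumes compact_X: "compact X" and connected_X: "connected X" and continuous_f: "continuous_on X f"
    and closed_sublevel_diff_component:
      "\<And>b x. closed ({y\<in>X. f y \<le> b} - connected_component_set {y\<in>X. f y \<le> b} x)"
begin

abbreviation "sublevel b \<equiv> {y\<in>X. f y \<le> b}"
abbreviation "cc b x \<equiv> connected_component_set (sublevel b) x"
abbreviation "T \<equiv> mt_topology X f"
abbreviation "node \<equiv> mt_class X f"
abbreviation "height \<equiv> mt_fun f"
abbreviation "mh \<equiv> merge_height X f"

lemma closed_sublevel: "closed (sublevel b)"
proof -
  have "sublevel b = X \<inter> f -` {..b}" by auto
  then show ?thesis using continuous_closed_preimage[OF continuous_f compact_imp_closed[OF compact_X]] by simp
qed

lemma closed_cc: "closed (cc b x)"
  by (rule closed_connected_component[OF closed_sublevel])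

lemma compact_cc: "compact (cc b x)"
proof -
  have "cc b x = X \<inter> cc b x" using connected_component_subset by blast
  then show ?thesis using compact_Int_closed[OF compact_X closed_cc] by metis
qed

lemma cc_mono: "b \<le> b' \<Longrightarrow> cc b x \<subseteq> cc b' x"
  by (rule connected_component_mono) auto

lemma cc_subset: "y \<in> cc b x \<Longrightarrow> y \<in> X \<and> f y \<le> b"
  using connected_component_subset by blast

lemma cc_base: "y \<in> cc b x \<Longrightarrow> x \<in> X \<and> f x \<le> b"
  by (metis (no_types, lifting) connected_component_eq_empty empty_iff mem_Collect_eq)

lemma cc_self: "x \<in> X \<Longrightarrow> f x \<le> b \<Longrightarrow> x \<in> cc b x"
  by (simp add: connected_component_refl)

lemma cc_eq: "y \<in> cc b x \<Longrightarrow> cc b y = cc b x"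
  by (rule connected_component_eq)

lemma cc_sym: "y \<in> cc b x \<Longrightarrow> x \<in> cc b y"
  by (simp add: connected_component_sym)

lemma cc_eq_X:
  assumes "\<forall>x\<in>X. f x \<le> b" and "v \<in> X"
  shows "cc b v = X"
proof -
  have "sublevel b = X" using assms(1) by auto
  then show ?thesis using connected_component_eq_self[OF connected_X assms(2)] by simp
qed

lemma openin_cc_below: "openin (top_of_set X) {x\<in>cc b v. f x < b}"
proof -
  have "{x\<in>cc b v. f x < b} = (X \<inter> f -` {..<b}) \<inter> - (sublevel b - cc b v)"
    using connected_component_subset[of "sublevel b" v] by auto
  moreover have "openin (top_of_set X) (X \<inter> f -` {..<b})"
    using continuous_openin_preimage_gen[OF continuous_f, of "{..<b}"] by simp
  ultimately show ?thesis
    using openin_Int_open[OF _ open_Compl[OF closed_sublevel_diff_component]] by simp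
qed

lemma mem_cc_of_mem_cc_add:
  assumes "\<And>e. e > 0 \<Longrightarrow> y \<in> cc (b + e) v"
  shows "y \<in> cc b v"
proof -
  define S where "S = (\<lambda>n::nat. cc (b + 1 / real (Suc n)) v)"
  have "connected (\<Inter>(range S))"
  proof (rule connected_nest)
    show "compact (S n)" "connected (S n)" for n unfolding S_def by (simp_all add: compact_cc)
    show "S n \<subseteq> S m" if "m \<le> n" for m n
      unfolding S_def using that by (intro cc_mono) (simp add: frac_le)
  qed
  moreover have yS: "y \<in> S n" for n unfolding S_def using assms by auto
  moreover have "v \<in> \<Inter>(range S)" using yS cc_base cc_self unfolding S_def by blast
  moreover have "\<Inter>(range S) \<subseteq> sublevel b"
  proof
    fix z assume "z \<in> \<Inter>(range S)"
    then have z: "z \<in> X" "\<And>n. f z \<le> b + 1 / real (Suc n)" unfolding S_def using cc_subset by blast+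
    have "f z \<le> b"
    proof (rule ccontr)
      assume "\<not> f z \<le> b"
      then obtain n where "1 / real (Suc n) < f z - b"
        using reals_Archimedean[of "f z - b"] by (auto simp: inverse_eq_divide)
      then show False using z(2)[of n] by simp
    qed
    then show "z \<in> sublevel b" using z by simp
  qed
  ultimately have "\<Inter>(range S) \<subseteq> cc b v"
    by (intro connected_component_maximal)
  then show ?thesis using yS by blast
qed

lemma mt_rel_refl: "x \<in> X \<Longrightarrow> mt_rel X f x x"
  unfolding mt_rel_def by (simp add: connected_component_refl)

lemma mt_relD: "mt_rel X f x y \<Longrightarrow> x \<in> X \<and> y \<in> X \<and> f y = f x \<and> y \<in> cc (f x) x"
  unfolding mt_rel_def by auto

lemma mt_rel_sym: "mt_rel X f x y \<Longrightarrow> mt_rel X f y x"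
  unfolding mt_rel_def by (auto simp: connected_component_sym)

lemma mt_rel_trans:
  assumes "mt_rel X f x y" and "mt_rel X f y z"
  shows "mt_rel X f x z"
proof -
  have xy: "x \<in> X" "f y = f x" "y \<in> cc (f x) x" and yz: "z \<in> X" "f z = f y" "z \<in> cc (f y) y"
    using mt_relD[OF assms(1)] mt_relD[OF assms(2)] by auto
  then have "z \<in> cc (f x) x" using cc_eq[OF xy(3)] by simp
  then show ?thesis using xy yz unfolding mt_rel_def by simp
qed

lemma node_eq_iff:
  assumes "x \<in> X" and "y \<in> X"
  shows "node x = node y \<longleftrightarrow> mt_rel X f x y"
proof
  assume "node x = node y"
  then show "mt_rel X f x y" using mt_rel_refl[OF assms(2)] unfolding mt_class_def by blast
next
  assume xy: "mt_rel X f x y"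
  have "mt_rel X f x = mt_rel X f y"
    using mt_rel_trans[OF xy] mt_rel_trans[OF mt_rel_sym[OF xy]] by blast
  then show "node x = node y" unfolding mt_class_def by simp
qed

lemma height_node:
  assumes "x \<in> X"
  shows "height (node x) = f x"
proof -
  have "x \<in> node x" unfolding mt_class_def using mt_rel_refl[OF assms] by simp
  then have "(SOME y. y \<in> node x) \<in> node x" by (rule someI)
  then show ?thesis unfolding mt_fun_def mt_class_def using mt_relD by auto
qed

lemma openin_T: "openin T U \<longleftrightarrow> U \<subseteq> node ` X \<and> openin (top_of_set X) {x\<in>X. node x \<in> U}"
proof -
  have "istopology (\<lambda>U. U \<subseteq> node ` X \<and> openin (top_of_set X) {x\<in>X. node x \<in> U})"
    unfolding istopology_def
  proof (rule conjI; intro allI impI)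
    fix U V assume "U \<subseteq> node ` X \<and> openin (top_of_set X) {x\<in>X. node x \<in> U}"
      and "V \<subseteq> node ` X \<and> openin (top_of_set X) {x\<in>X. node x \<in> V}"
    moreover have "{x\<in>X. node x \<in> U \<inter> V} = {x\<in>X. node x \<in> U} \<inter> {x\<in>X. node x \<in> V}" by auto
    ultimately show "U \<inter> V \<subseteq> node ` X \<and> openin (top_of_set X) {x\<in>X. node x \<in> U \<inter> V}" by auto
  next
    fix \<U> assume "\<forall>U\<in>\<U>. U \<subseteq> node ` X \<and> openin (top_of_set X) {x\<in>X. node x \<in> U}"
    moreover have "{x\<in>X. node x \<in> \<Union>\<U>} = (\<Union>U\<in>\<U>. {x\<in>X. node x \<in> U})" by auto
    ultimately show "\<Union>\<U> \<subseteq> node ` X \<and> openin (top_of_set X) {x\<in>X. node x \<in> \<Union>\<U>}"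
      by (auto intro!: openin_Union)
  qed
  then show ?thesis unfolding mt_topology_def mt_points_def by (simp add: topology_inverse')
qed

lemma topspace_T: "topspace T = node ` X"
proof -
  have "{x\<in>X. node x \<in> node ` X} = X" by auto
  then have "openin T (node ` X)" unfolding openin_T by simp
  then have "node ` X \<subseteq> topspace T" by (rule openin_subset)
  moreover have "topspace T \<subseteq> node ` X" using openin_T[of "topspace T"] by simp
  ultimately show ?thesis by blast
qed

lemma openin_node_image:
  assumes "openin (top_of_set X) U" and "\<And>x y. x \<in> U \<Longrightarrow> y \<in> X \<Longrightarrow> node y = node x \<Longrightarrow> y \<in> U"
  shows "openin T (node ` U)"
proof -
  have UX: "U \<subseteq> X" using openin_subset[OF assms(1)] by simp
  have "{x\<in>X. node x \<in> node ` U} = U"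
  proof (intro equalityI subsetI)
    fix x assume "x \<in> {x\<in>X. node x \<in> node ` U}"
    then obtain z where "x \<in> X" "z \<in> U" "node x = node z" by auto
    then show "x \<in> U" using assms(2) by blast
  qed (use UX in auto)
  then show ?thesis unfolding openin_T using assms(1) UX by auto
qed

lemma merge_height_set_nonempty:
  assumes "v \<in> X" and "w \<in> X"
  shows "{b. w \<in> cc b v} \<noteq> {}"
proof -
  obtain xm where "xm \<in> X" "\<forall>x\<in>X. f x \<le> f xm"
    using continuous_attains_sup[OF compact_X _ continuous_f] assms by auto
  then have "w \<in> cc (f xm) v" using cc_eq_X assms by auto
  then show ?thesis by auto
qed

lemma merge_height_le:
  assumes "w \<in> cc b v"
  shows "mh v w \<le> b"
proof -
  have "bdd_below {b. w \<in> cc b v}" using cc_base by (intro bdd_belowI[of _ "f v"]) blast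
  then show ?thesis unfolding merge_height_def using assms by (intro cInf_lower) simp_all
qed

lemma merge_height_ge:
  assumes "v \<in> X" and "w \<in> X"
  shows "f v \<le> mh v w"
  unfolding merge_height_def
proof (rule cInf_greatest[OF merge_height_set_nonempty[OF assms]])
  fix b assume "b \<in> {b. w \<in> cc b v}"
  then show "f v \<le> b" using cc_base by blast
qed

lemma merge_height_sym: "mh v w = mh w v"
proof -
  have "{b. w \<in> cc b v} = {b. v \<in> cc b w}" using cc_sym by blast
  then show ?thesis unfolding merge_height_def by simp
qed

lemma mem_cc_merge_height:
  assumes "v \<in> X" and "w \<in> X"
  shows "w \<in> cc (mh v w) v"
proof (rule mem_cc_of_mem_cc_add)
  fix e :: real assume "e > 0"
  then have "Inf {b. w \<in> cc b v} < mh v w + e" unfolding merge_height_def by simp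
  then obtain b where "w \<in> cc b v" "b < mh v w + e"
    using cInf_lessD[OF merge_height_set_nonempty[OF assms]] by auto
  then show "w \<in> cc (mh v w + e) v" using cc_mono[of b "mh v w + e" v] by auto
qed

text \<open>All points of a crest are identified in \<open>T\<close>, and removing this single point separates \<open>T\<close>
  into the part of the component strictly below \<open>h\<close> and the part outside it.\<close>
definition crest :: "'a \<Rightarrow> real \<Rightarrow> 'a set" where
  "crest v h = {y \<in> cc h v. f y = h}"

lemma crestD: "y \<in> crest v h \<Longrightarrow> y \<in> X \<and> f y = h \<and> y \<in> cc h v"
  unfolding crest_def using cc_subset by blast

lemma node_crest_eq:
  assumes "y \<in> crest v h" and "y' \<in> crest v h"
  shows "node y = node y'"
proof -
  have y: "y \<in> X" "f y = h" "y \<in> cc h v" and y': "y' \<in> X" "f y' = h" "y' \<in> cc h v"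
    using crestD assms by auto
  then have "y' \<in> cc (f y) y" using cc_eq[OF y(3)] by simp
  then show ?thesis using node_eq_iff y y' unfolding mt_rel_def by simp
qed

lemma node_saturated_below:
  assumes "x \<in> cc b v" "f x < b" and "y \<in> X" "node y = node x"
  shows "y \<in> cc b v \<and> f y < b"
proof -
  have "x \<in> X" using assms(1) cc_subset by blast
  then have "mt_rel X f x y" using node_eq_iff assms(3,4) by blast
  then have "f y = f x" "y \<in> cc (f x) x" using mt_relD by blast+
  moreover have "cc (f x) x \<subseteq> cc b v" using cc_mono[of "f x" b x] cc_eq[OF assms(1)] assms(2) by simp
  ultimately show ?thesis using assms(2) by auto
qed

lemma node_saturated_outside:
  assumes "x \<in> X - cc b v" and "y \<in> X" "node y = node x"
  shows "y \<in> X - cc b v"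
proof (rule ccontr)
  assume "y \<notin> X - cc b v"
  then have y: "y \<in> cc b v" using assms(2) by blast
  have "mt_rel X f y x" using node_eq_iff assms by blast
  then have "f y = f x" "x \<in> cc (f y) y" using mt_relD by auto
  moreover have "f y \<le> b" using y cc_subset by blast
  ultimately have "x \<in> cc b y" using cc_mono[of "f y" b y] by auto
  then show False using cc_eq[OF y] assms(1) by simp
qed

lemma openin_node_below: "openin T (node ` {x\<in>cc b v. f x < b})"
  by (rule openin_node_image[OF openin_cc_below]) (use node_saturated_below in blast)

lemma openin_node_outside: "openin T (node ` (X - cc b v))"
proof (rule openin_node_image)
  show "openin (top_of_set X) (X - cc b v)"
    unfolding Diff_eq by (rule openin_open_Int[OF open_Compl[OF closed_cc]])
qed (use node_saturated_outside in blast)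

lemma node_mem_below_iff:
  assumes "y \<in> X"
  shows "node y \<in> node ` {x\<in>cc b v. f x < b} \<longleftrightarrow> y \<in> cc b v \<and> f y < b"
  using node_saturated_below assms by blast

lemma topspace_T_cover:
  assumes "c \<in> topspace T"
  shows "c \<in> node ` {x\<in>cc b v. f x < b} \<union> node ` crest v b \<union> node ` (X - cc b v)"
proof -
  obtain x where x: "x \<in> X" "c = node x" using assms topspace_T by auto
  show ?thesis
  proof (cases "x \<in> cc b v")
    case True
    then have "f x \<le> b" using cc_subset by blast
    then show ?thesis using x True unfolding crest_def by (cases "f x < b") auto
  qed (use x in auto)
qed

lemma connectedin_below_crest:
  assumes G: "connectedin T G" and "G \<inter> node ` crest v b = {}"
    and "G \<inter> node ` {x\<in>cc b v. f x < b} \<noteq> {}"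
  shows "G \<subseteq> node ` {x\<in>cc b v. f x < b}"
proof -
  let ?U = "node ` {x\<in>cc b v. f x < b}" and ?W = "node ` (X - cc b v)"
  have GUW: "G \<subseteq> ?U \<union> ?W"
  proof
    fix c assume "c \<in> G"
    then show "c \<in> ?U \<union> ?W"
      using topspace_T_cover[of c b v] connectedin_subset_topspace[OF G] assms(2) by blast
  qed
  have "c \<notin> ?W" if c: "c \<in> ?U" for c
  proof
    assume "c \<in> ?W"
    then obtain y where y: "y \<in> X - cc b v" "c = node y" by blast
    obtain x where x: "x \<in> cc b v" "f x < b" "c = node x" using c by blast
    have "y \<in> cc b v" using node_saturated_below[OF x(1,2), of y] y x by simp
    then show False using y by blast
  qed
  then have "G \<inter> ?W = {}"
    using connectedinD[OF G openin_node_below openin_node_outside GUW] assms(3) by blast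
  then show ?thesis using GUW by blast
qed


lemma merge_height_le_of_connectedin:
  assumes v: "v \<in> X" and w: "w \<in> X" and G: "connectedin T G" and "node v \<in> G" "node w \<in> G"
    and G_le: "\<And>c. c \<in> G \<Longrightarrow> height c \<le> a"
  shows "mh v w \<le> a"
proof -
  have "w \<in> cc a v"
  proof (rule mem_cc_of_mem_cc_add)
    fix e :: real assume "e > 0"
    have "height (node y) = a + e" if "y \<in> crest v (a + e)" for y
      using crestD[OF that] height_node by auto
    then have "G \<inter> node ` crest v (a + e) = {}" using G_le \<open>e > 0\<close> by fastforce
    moreover have "f v \<le> a" using G_le[of "node v"] height_node[OF v] \<open>node v \<in> G\<close> by simp
    then have "node v \<in> G \<inter> node ` {x\<in>cc (a + e) v. f x < a + e}"
      using \<open>node v \<in> G\<close> cc_self[OF v] \<open>e > 0\<close> by auto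
    ultimately have "node w \<in> node ` {x\<in>cc (a + e) v. f x < a + e}"
      using connectedin_below_crest[OF G] \<open>node w \<in> G\<close> by blast
    then show "w \<in> cc (a + e) v" using node_mem_below_iff[OF w] by blast
  qed
  then show ?thesis by (rule merge_height_le)
qed

text \<open>An arc meets the single point \<open>node ` crest v b\<close> at most once, so one of its two halves
  around \<open>t\<close> avoids it; that half starts below \<open>b\<close> and hence stays below \<open>b\<close>.\<close>
lemma arc_height_le:
  assumes v: "v \<in> X" and w: "w \<in> X" and g: "pathin T g" and inj: "inj_on g {0..1}"
    and g0: "g 0 = node v" and g1: "g 1 = node w" and wb: "w \<in> cc b v" and t: "t \<in> {0..1}"
  shows "height (g t) \<le> b"
proof (rule ccontr)
  assume "\<not> height (g t) \<le> b"
  let ?U = "node ` {x\<in>cc b v. f x < b}" and ?C = "node ` crest v b"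
  have U_lt: "height c < b" if c: "c \<in> ?U" for c
  proof -
    obtain x where "x \<in> cc b v" "f x < b" "c = node x" using c by blast
    then show ?thesis using height_node cc_subset by metis
  qed
  have C_eq: "height c = b" if c: "c \<in> ?C" for c
  proof -
    obtain x where "x \<in> crest v b" "c = node x" using c by blast
    then show ?thesis using height_node crestD by metis
  qed
  have gt: "g t \<notin> ?U" "g t \<notin> ?C" using U_lt C_eq \<open>\<not> height (g t) \<le> b\<close> by force+
  have ends: "g s \<in> ?U \<union> ?C" if "s \<in> {0, 1}" for s
  proof -
    have mem: "node u \<in> ?U \<union> ?C" if u: "u \<in> cc b v" for u
      using cc_subset[OF u] u unfolding crest_def by (cases "f u < b") auto
    have "v \<in> cc b v" using cc_base[OF wb] cc_self by blast
    then show ?thesis using that g0 g1 mem[of v] mem[OF wb] by auto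
  qed
  have meets: "g ` closed_segment s t \<inter> ?C \<noteq> {}" if s: "s \<in> {0, 1}" for s
  proof
    assume avoid: "g ` closed_segment s t \<inter> ?C = {}"
    have "closed_segment s t \<subseteq> {0..1}" using s t by (auto simp: closed_segment_eq_real_ivl)
    then have "connectedin (subtopology euclideanreal {0..1}) (closed_segment s t)"
      by (simp add: connectedin_subtopology)
    then have conn: "connectedin T (g ` closed_segment s t)"
      using connectedin_continuous_map_image g unfolding pathin_def by blast
    have "g s \<in> g ` closed_segment s t \<inter> ?U" using ends[OF s] avoid by auto
    then have "g ` closed_segment s t \<subseteq> ?U" using connectedin_below_crest[OF conn avoid] by blast
    then show False using gt by auto
  qed
  obtain s0 s1 where s0: "s0 \<in> closed_segment 0 t" "g s0 \<in> ?C"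
    and s1: "s1 \<in> closed_segment 1 t" "g s1 \<in> ?C"
    using meets[of 0] meets[of 1] by blast
  have "g s0 = g s1" using s0(2) s1(2) node_crest_eq by blast
  moreover have "s0 \<in> {0..1}" "s1 \<in> {0..1}"
    using s0(1) s1(1) t by (auto simp: closed_segment_eq_real_ivl split: if_splits)
  ultimately have "s0 = s1" using inj by (auto simp: inj_on_def)
  then have "s0 = t" using s0(1) s1(1) t by (auto simp: closed_segment_eq_real_ivl split: if_splits)
  then show False using s0(2) gt by simp
qed

definition ancestor :: "'a \<Rightarrow> real \<Rightarrow> 'a set" where
  "ancestor v h = node (SOME y. y \<in> crest v h)"

lemma ancestor_eq: "y \<in> crest v h \<Longrightarrow> ancestor v h = node y"
  unfolding ancestor_def by (metis node_crest_eq someI)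

text \<open>If \<open>cc h v\<close> had no point at height \<open>h\<close>, it would be open and closed in \<open>X\<close>, hence all
  of \<open>X\<close>, and \<open>v\<close>, \<open>w\<close> would merge strictly below \<open>h\<close>.\<close>
lemma crest_nonempty:
  assumes v: "v \<in> X" and w: "w \<in> X" and h: "f v \<le> h" "h \<le> mh v w"
  shows "crest v h \<noteq> {}"
proof
  assume empty: "crest v h = {}"
  have vA: "v \<in> cc h v" using cc_self[OF v] h by simp
  have below: "f y < h" if "y \<in> cc h v" for y
    using that cc_subset[OF that] empty unfolding crest_def by force
  have "{x\<in>cc h v. f x < h} = cc h v" using below by blast
  then have "openin (top_of_set X) (cc h v)"
    by (rule back_subst[of "openin (top_of_set X)", OF openin_cc_below])
  moreover have "closedin (top_of_set X) (cc h v)"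
    by (rule closed_subset[OF _ closed_cc]) (use cc_subset in blast)
  ultimately have X: "cc h v = X" using connected_X[unfolded connected_clopen] vA by blast
  obtain xm where xm: "xm \<in> X" "\<forall>y\<in>X. f y \<le> f xm"
    using continuous_attains_sup[OF compact_X _ continuous_f] vA X by blast
  then have "w \<in> cc (f xm) v" using cc_eq_X[OF xm(2) v] w by simp
  then have "mh v w \<le> f xm" by (rule merge_height_le)
  then show False using below[of xm] xm(1) X h by simp
qed

lemma height_ancestor:
  assumes "v \<in> X" "w \<in> X" "h \<in> {f v..mh v w}"
  shows "height (ancestor v h) = h"
proof -
  obtain y where "y \<in> crest v h" using crest_nonempty assms by fastforce
  then show ?thesis using ancestor_eq height_node crestD by metis
qed

lemma ancestor_in_topspace:
  assumes "v \<in> X" "w \<in> X" "h \<in> {f v..mh v w}"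
  shows "ancestor v h \<in> topspace T"
proof -
  obtain y where "y \<in> crest v h" using crest_nonempty assms by fastforce
  then show ?thesis using ancestor_eq topspace_T crestD by fastforce
qed

lemma crest_limit:
  assumes ys: "\<And>n. ys n \<in> crest v (hs n)" and hs: "hs \<longlonglongrightarrow> h0" and lim: "ys \<longlonglongrightarrow> l"
  shows "l \<in> crest v h0"
proof -
  have ysX: "ys n \<in> X" and fys: "f (ys n) = hs n" and ys_cc: "ys n \<in> cc (hs n) v" for n
    using crestD[OF ys] by auto
  have l: "l \<in> X"
    using Lim_in_closed_set[OF compact_imp_closed[OF compact_X] _ _ lim] ysX by simp
  have "(\<lambda>n. f (ys n)) \<longlonglongrightarrow> f l"
    using continuous_on_tendsto_compose[OF continuous_f lim l] ysX by simp
  then have fl: "f l = h0" using fys hs LIMSEQ_unique by simp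
  have "l \<in> cc (h0 + e) v" if "e > 0" for e
  proof (rule Lim_in_closed_set[OF closed_cc _ _ lim])
    have "\<forall>\<^sub>F n in sequentially. hs n < h0 + e" using order_tendstoD(2)[OF hs] that by simp
    then show "\<forall>\<^sub>F n in sequentially. ys n \<in> cc (h0 + e) v"
    proof (rule eventually_mono)
      fix n assume "hs n < h0 + e"
      then show "ys n \<in> cc (h0 + e) v" using ys_cc[of n] cc_mono[of "hs n" "h0 + e" v] by auto
    qed
  qed simp
  then show ?thesis unfolding crest_def using mem_cc_of_mem_cc_add fl by blast
qed

text \<open>Heights converging to \<open>h0\<close> whose ancestors avoid \<open>V\<close> would, by compactness, have
  representatives converging to a point of \<open>crest v h0\<close>, whose node lies in the open set \<open>V\<close>.\<close>
lemma ancestor_continuous_at: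
  assumes v: "v \<in> X" and w: "w \<in> X" and h0: "h0 \<in> {f v..mh v w}"
    and V: "openin T V" "ancestor v h0 \<in> V"
  shows "\<exists>d>0. \<forall>h\<in>{f v..mh v w}. \<bar>h - h0\<bar> < d \<longrightarrow> ancestor v h \<in> V"
proof (rule ccontr)
  assume "\<not> ?thesis"
  then have "\<forall>n. \<exists>h. h \<in> {f v..mh v w} \<and> \<bar>h - h0\<bar> < 1 / real (Suc n) \<and> ancestor v h \<notin> V"
    by (metis of_nat_0_less_iff zero_less_Suc zero_less_divide_1_iff)
  then obtain hs where hs: "\<And>n. hs n \<in> {f v..mh v w}" "\<And>n. \<bar>hs n - h0\<bar> < 1 / real (Suc n)"
    "\<And>n. ancestor v (hs n) \<notin> V"
    by metis
  define ys where "ys = (\<lambda>n. SOME y. y \<in> crest v (hs n))"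
  have ys: "ys n \<in> crest v (hs n)" for n
    unfolding ys_def using crest_nonempty[OF v w] hs(1) by (simp add: some_in_eq)
  obtain l r where "l \<in> X" and r: "strict_mono r" and lim: "(ys \<circ> r) \<longlonglongrightarrow> l"
    using compact_X[unfolded compact_eq_seq_compact_metric seq_compact_def] ys crestD by metis
  have "hs \<longlonglongrightarrow> h0" using LIMSEQ_norm_0[of "\<lambda>n. hs n - h0"] hs(2) by (simp add: LIM_zero_iff)
  then have "(hs \<circ> r) \<longlonglongrightarrow> h0" using r by (rule LIMSEQ_subseq_LIMSEQ)
  then have "l \<in> crest v h0" using crest_limit[of "ys \<circ> r" v "hs \<circ> r"] ys lim by simp
  then have "l \<in> {x\<in>X. node x \<in> V}" using ancestor_eq V(2) \<open>l \<in> X\<close> by simp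
  moreover obtain G where G: "open G" "{x\<in>X. node x \<in> V} = X \<inter> G"
    using V(1) unfolding openin_T openin_open by blast
  ultimately have "\<forall>\<^sub>F n in sequentially. ys (r n) \<in> G" using topological_tendstoD[OF lim] by auto
  then obtain n where "ys (r n) \<in> G" using eventually_sequentially by auto
  moreover have "ys (r n) \<in> X" using ys crestD by blast
  ultimately have "node (ys (r n)) \<in> V" using G by blast
  then have "ancestor v (hs (r n)) \<in> V" using ancestor_eq[OF ys] by simp
  then show False using hs(3) by simp
qed

lemma continuous_map_ancestor:
  assumes v: "v \<in> X" and w: "w \<in> X"
  shows "continuous_map (top_of_set {f v..mh v w}) T (ancestor v)"
  unfolding continuous_map_eq_topcontinuous_at topcontinuous_at_def
proof (intro ballI conjI allI impI)
  fix h0 assume h0: "h0 \<in> topspace (top_of_set {f v..mh v w})"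
  then show "h0 \<in> topspace (top_of_set {f v..mh v w})" .
  show "ancestor v \<in> topspace (top_of_set {f v..mh v w}) \<rightarrow> topspace T"
    using ancestor_in_topspace[OF v w] by auto
  fix V assume V: "openin T V \<and> ancestor v h0 \<in> V"
  obtain d where d: "d > 0" "\<forall>h\<in>{f v..mh v w}. \<bar>h - h0\<bar> < d \<longrightarrow> ancestor v h \<in> V"
    using ancestor_continuous_at[OF v w _ conjunct1[OF V] conjunct2[OF V]] h0 by auto
  show "\<exists>U. openin (top_of_set {f v..mh v w}) U \<and> h0 \<in> U \<and> (\<forall>h\<in>U. ancestor v h \<in> V)"
  proof (intro exI conjI)
    show "openin (top_of_set {f v..mh v w}) ({f v..mh v w} \<inter> ball h0 d)"
      by (rule openin_open_Int) simp
    show "h0 \<in> {f v..mh v w} \<inter> ball h0 d" using d h0 by simp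
    show "\<forall>h\<in>{f v..mh v w} \<inter> ball h0 d. ancestor v h \<in> V"
      using d by (auto simp: dist_real_def abs_minus_commute)
  qed
qed

lemma ancestors_distinct_below_merge:
  assumes v: "v \<in> X" and w: "w \<in> X" and h: "h < mh v w" "f v \<le> h" "f w \<le> h"
  shows "ancestor v h \<noteq> ancestor w h"
proof
  assume eq: "ancestor v h = ancestor w h"
  obtain y where y: "y \<in> crest v h" using crest_nonempty[OF v w] h by fastforce
  obtain y' where y': "y' \<in> crest w h"
    using crest_nonempty[OF w v] h merge_height_sym[of v w] by fastforce
  have "mt_rel X f y y'" using node_eq_iff crestD y y' eq ancestor_eq by metis
  then have yy': "y' \<in> cc h y" using mt_relD crestD[OF y] by metis
  have "y' \<in> cc h w" "y \<in> cc h v" using crestD[OF y'] crestD[OF y] by blast+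
  have "cc h w = cc h y'" using cc_eq[OF \<open>y' \<in> cc h w\<close>] by simp
  also have "\<dots> = cc h y" using cc_eq[OF yy'] .
  also have "\<dots> = cc h v" using cc_eq[OF \<open>y \<in> cc h v\<close>] .
  finally have "cc h w = cc h v" .
  then have "w \<in> cc h v" using cc_self[OF w] h by auto
  then show False using merge_height_le[of w h v] h by simp
qed

lemma ancestor_merge_height:
  assumes "v \<in> X" "w \<in> X"
  shows "ancestor v (mh v w) = ancestor w (mh v w)"
proof -
  obtain y where y: "y \<in> crest v (mh v w)" using crest_nonempty assms merge_height_ge by fastforce
  have "cc (mh v w) w = cc (mh v w) v" using cc_eq[OF mem_cc_merge_height[OF assms]] .
  then have "y \<in> crest w (mh v w)" using y unfolding crest_def by simp
  then show ?thesis using ancestor_eq y by simp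
qed

lemma continuous_map_ancestor_rescaled:
  assumes "\<And>s. s \<in> S \<Longrightarrow> 0 \<le> c + s * d \<and> c + s * d \<le> mh u u' - f u" and "u \<in> X" "u' \<in> X"
  shows "continuous_map (top_of_set S) T (\<lambda>s. ancestor u (f u + (c + s * d)))"
proof -
  have "continuous_map (top_of_set S) (top_of_set {f u..mh u u'}) (\<lambda>s. f u + (c + s * d))"
    unfolding continuous_map_in_subtopology
  proof
    show "(\<lambda>s. f u + (c + s * d)) \<in> topspace (top_of_set S) \<rightarrow> {f u..mh u u'}"
      using assms(1) by (force simp: algebra_simps)
  qed (auto intro!: continuous_intros)
  from continuous_map_compose[OF this continuous_map_ancestor[OF assms(2,3)]] show ?thesis
    by (simp add: o_def)
qed

text \<open>Going up from \<open>node v\<close> to the merge point and down to \<open>node w\<close>, parametrised by height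
  travelled; the total length is \<open>2 mh v w - f v - f w\<close>.\<close>
definition join_path :: "'a \<Rightarrow> 'a \<Rightarrow> real \<Rightarrow> 'a set" where
  "join_path v w s =
    (if s * (2 * mh v w - f v - f w) \<le> mh v w - f v then ancestor v (f v + s * (2 * mh v w - f v - f w))
     else ancestor w (f w + (1 - s) * (2 * mh v w - f v - f w)))"

context
  fixes v w assumes v: "v \<in> X" and w: "w \<in> X"
begin

private abbreviation "L \<equiv> 2 * mh v w - f v - f w"

lemma length_join_path_nonneg: "0 \<le> L"
  using merge_height_ge[OF v w] merge_height_ge[OF w v] merge_height_sym[of v w] by simp

lemma pathin_join_path: "pathin T (join_path v w)"
proof -
  have up: "continuous_map (top_of_set S) T (\<lambda>s. ancestor v (f v + s * L))"
    if "S \<subseteq> {s. 0 \<le> s \<and> s * L \<le> mh v w - f v}" for S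
    using continuous_map_ancestor_rescaled[of S 0 L v w] that v w length_join_path_nonneg
    by (auto simp: zero_le_mult_iff)
  have down: "continuous_map (top_of_set S) T (\<lambda>s. ancestor w (f w + (1 - s) * L))"
    if S: "S \<subseteq> {s. s \<le> 1 \<and> mh v w - f v \<le> s * L}" for S
  proof -
    have "continuous_map (top_of_set S) T (\<lambda>s. ancestor w (f w + (L + s * - L)))"
    proof (rule continuous_map_ancestor_rescaled[OF _ w v])
      fix s assume "s \<in> S"
      then have "0 \<le> (1 - s) * L" "mh v w - f v \<le> s * L" using S length_join_path_nonneg by auto
      then show "0 \<le> L + s * - L \<and> L + s * - L \<le> mh w v - f w"
        using merge_height_sym[of v w] by (simp add: algebra_simps)
    qed
    then show ?thesis by (simp add: algebra_simps)
  qed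
  show ?thesis
    unfolding pathin_def join_path_def
  proof (rule continuous_map_cases_le)
    show "continuous_map (top_of_set {0..1}) euclideanreal (\<lambda>s. s * L)"
      "continuous_map (top_of_set {0..1}) euclideanreal (\<lambda>s. mh v w - f v)"
      by (auto intro!: continuous_intros)
    show "continuous_map (subtopology (top_of_set {0..1}) {s \<in> topspace (top_of_set {0..1}). s * L \<le> mh v w - f v})
        T (\<lambda>s. ancestor v (f v + s * L))"
      unfolding subtopology_subtopology by (rule up) auto
    show "continuous_map (subtopology (top_of_set {0..1}) {s \<in> topspace (top_of_set {0..1}). mh v w - f v \<le> s * L})
        T (\<lambda>s. ancestor w (f w + (1 - s) * L))"
      unfolding subtopology_subtopology by (rule down) auto
  next
    fix s assume "s * L = mh v w - f v"
    then have "f v + s * L = mh v w" "f w + (1 - s) * L = mh v w" by (auto simp: algebra_simps)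
    then show "ancestor v (f v + s * L) = ancestor w (f w + (1 - s) * L)"
      using ancestor_merge_height[OF v w] by simp
  qed
qed

lemma height_join_path:
  assumes "s \<in> {0..1}"
  shows "height (join_path v w s) = (if s * L \<le> mh v w - f v then f v + s * L else f w + (1 - s) * L)"
proof (cases "s * L \<le> mh v w - f v")
  case True
  then show ?thesis
    using assms length_join_path_nonneg height_ancestor[OF v w] by (simp add: join_path_def)
next
  case False
  have "0 \<le> (1 - s) * L" using assms length_join_path_nonneg by simp
  moreover have "(1 - s) * L \<le> mh w v - f w" using False merge_height_sym[of v w] by (simp add: algebra_simps)
  ultimately have "f w + (1 - s) * L \<in> {f w..mh w v}" by simp
  then show ?thesis using False height_ancestor[OF w v] by (simp add: join_path_def)
qed

lemma join_path_0: "join_path v w 0 = node v"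
  using ancestor_eq[of v v "f v"] cc_self[OF v] v unfolding join_path_def crest_def
  by (simp add: merge_height_ge[OF v w])

lemma join_path_1: "join_path v w 1 = node w"
proof (cases "L \<le> mh v w - f v")
  case True
  then have "f w = mh v w" using merge_height_ge[OF w v] merge_height_sym[of v w] by simp
  then have "w \<in> crest v (mh v w)" using mem_cc_merge_height[OF v w] unfolding crest_def by simp
  then show ?thesis using True \<open>f w = mh v w\<close> ancestor_eq unfolding join_path_def by simp
next
  case False
  have "w \<in> crest w (f w)" unfolding crest_def using cc_self[OF w] w by simp
  then show ?thesis using False ancestor_eq unfolding join_path_def by simp
qed

lemma length_join_path_pos:
  assumes "node v \<noteq> node w"
  shows "0 < L"
proof (rule ccontr)
  assume "\<not> 0 < L"
  then have "f v = mh v w" "f w = mh v w"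
    using merge_height_ge[OF v w] merge_height_ge[OF w v] merge_height_sym[of v w] by auto
  then have "mt_rel X f v w" unfolding mt_rel_def using v w mem_cc_merge_height[OF v w] by simp
  then show False using assms node_eq_iff[OF v w] by simp
qed

text \<open>Heights separate the points of each leg, and \<open>ancestors_distinct_below_merge\<close> separates
  the two legs.\<close>
lemma inj_on_join_path:
  assumes "node v \<noteq> node w"
  shows "inj_on (join_path v w) {0..1}"
proof -
  have "0 < L" using length_join_path_pos[OF assms] .
  have legs: "join_path v w s \<noteq> join_path v w s'"
    if s: "s \<in> {0..1}" "s * L \<le> mh v w - f v" and s': "s' \<in> {0..1}" "\<not> s' * L \<le> mh v w - f v" for s s'
  proof
    assume eq: "join_path v w s = join_path v w s'"
    define h where "h = f v + s * L"
    have "h = f w + (1 - s') * L"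
      using arg_cong[OF eq, of height] height_join_path[OF s(1)] height_join_path[OF s'(1)] s s'
      by (simp add: h_def)
    moreover have "0 \<le> s * L" "0 \<le> (1 - s') * L" using s(1) s'(1) \<open>0 < L\<close> by simp_all
    ultimately have "h < mh v w" "f v \<le> h" "f w \<le> h"
      using s'(2) by (simp_all add: h_def algebra_simps)
    moreover have "join_path v w s = ancestor v h" "join_path v w s' = ancestor w h"
      using s s' \<open>h = f w + (1 - s') * L\<close> by (simp_all add: join_path_def h_def)
    ultimately show False using eq ancestors_distinct_below_merge[OF v w] by metis
  qed
  show ?thesis
  proof (rule inj_onI)
    fix s s' assume s: "s \<in> {0..1}" and s': "s' \<in> {0..1}" and eq: "join_path v w s = join_path v w s'"
    then have heq: "height (join_path v w s) = height (join_path v w s')" by simp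
    consider "s * L \<le> mh v w - f v" "s' * L \<le> mh v w - f v"
      | "\<not> s * L \<le> mh v w - f v" "\<not> s' * L \<le> mh v w - f v"
      using legs[OF s _ s'] legs[OF s' _ s] eq by metis
    then show "s = s'"
    proof cases
      case 1
      then have "s * L = s' * L" using heq height_join_path[OF s] height_join_path[OF s'] by simp
      then show ?thesis using \<open>0 < L\<close> by simp
    next
      case 2
      then have "(1 - s) * L = (1 - s') * L" using heq height_join_path[OF s] height_join_path[OF s'] by simp
      then show ?thesis using \<open>0 < L\<close> by simp
    qed
  qed
qed

lemma arc_join_path:
  assumes "node v \<noteq> node w"
  shows "arc_in T (join_path v w)"
  using pathin_join_path inj_on_join_path[OF assms] unfolding arc_in_def by blast

end

lemma lca_matrix_eq_merge_height:
  assumes v: "v \<in> X" and w: "w \<in> X"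
  shows "lca_matrix X f v w = mh v w"
proof (cases "node v = node w")
  case True
  then have "mt_rel X f v w" using node_eq_iff[OF v w] by simp
  then have "mh v w \<le> f v" using mt_relD merge_height_le by blast
  then have "mh v w = f v" using merge_height_ge[OF v w] by simp
  then show ?thesis using True height_node[OF v] unfolding lca_matrix_def mt_geodesic_def by simp
next
  case False
  have "\<exists>\<Gamma> g. arc_in T g \<and> g 0 = node v \<and> g 1 = node w \<and> \<Gamma> = g ` {0..1}"
    using arc_join_path[OF v w False] join_path_0[OF v w] join_path_1[OF v w] by blast
  then obtain g where g: "arc_in T g" "g 0 = node v" "g 1 = node w"
      and geo: "mt_geodesic X f (node v) (node w) = g ` {0..1}"
    unfolding mt_geodesic_def using someI_ex[of "\<lambda>\<Gamma>. (node v = node w \<and> \<Gamma> = {node v}) \<or>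
      (node v \<noteq> node w \<and> (\<exists>g. arc_in T g \<and> g 0 = node v \<and> g 1 = node w \<and> \<Gamma> = g ` {0..1}))"] False
    by blast
  have path: "pathin T g" and inj: "inj_on g {0..1}" using g(1) unfolding arc_in_def by auto
  have le: "height c \<le> mh v w" if "c \<in> g ` {0..1}" for c
    using arc_height_le[OF v w path inj g(2,3) mem_cc_merge_height[OF v w]] that by blast
  have "node v \<in> g ` {0..1}" "node w \<in> g ` {0..1}" using g(2,3) by force+
  moreover have "bdd_above (height ` g ` {0..1})" using le by (rule bdd_aboveI2)
  ultimately have ge: "mh v w \<le> Sup (height ` g ` {0..1})"
    by (intro merge_height_le_of_connectedin[OF v w connectedin_path_image[OF path]] cSup_upper imageI)
  have "Sup (height ` g ` {0..1}) \<le> mh v w" using le by (intro cSup_least) auto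
  then show ?thesis using ge unfolding lca_matrix_def geo by simp
qed

end

section \<open>Stability of the shortest-path representation\<close>

lemma merge_height_le_add:
  assumes f: "merge_tree_space X f" and g: "merge_tree_space X g" and "v \<in> X" "w \<in> X"
    and M: "\<And>x. x \<in> X \<Longrightarrow> \<bar>f x - g x\<bar> \<le> M"
  shows "merge_height X g v w \<le> merge_height X f v w + M"
proof -
  have "merge_height X g v w - M \<le> merge_height X f v w"
    unfolding merge_height_def[of X f]
  proof (rule cInf_greatest[OF merge_tree_space.merge_height_set_nonempty[OF f \<open>v \<in> X\<close> \<open>w \<in> X\<close>]])
    fix b assume "b \<in> {b. w \<in> connected_component_set {y\<in>X. f y \<le> b} v}"
    moreover have "{y\<in>X. f y \<le> b} \<subseteq> {y\<in>X. g y \<le> b + M}" using M by force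
    ultimately have "w \<in> connected_component_set {y\<in>X. g y \<le> b + M} v"
      using connected_component_mono by blast
    then show "merge_height X g v w - M \<le> b"
      using merge_tree_space.merge_height_le[OF g] by fastforce
  qed
  then show ?thesis by simp
qed

lemma sp_matrix_diff_le:
  assumes f: "merge_tree_space X f" and g: "merge_tree_space X g" and "v \<in> X" "w \<in> X"
    and M: "\<And>x. x \<in> X \<Longrightarrow> \<bar>f x - g x\<bar> \<le> M"
  shows "\<bar>sp_matrix X f v w - sp_matrix X g v w\<bar> \<le> 2 * M + \<bar>f v - g v\<bar> + \<bar>f w - g w\<bar>"
proof -
  have "merge_height X g v w \<le> merge_height X f v w + M"
    "merge_height X f v w \<le> merge_height X g v w + M"
    using merge_height_le_add[OF f g assms(3,4) M] merge_height_le_add[OF g f assms(3,4)] M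
    by (auto simp: abs_minus_commute)
  then show ?thesis
    using merge_tree_space.lca_matrix_eq_merge_height[OF f assms(3,4)]
      merge_tree_space.lca_matrix_eq_merge_height[OF g assms(3,4)]
    unfolding sp_matrix_def by linarith
qed

lemma merge_tree_space_pl_extension:
  assumes "simplicial_complex K" "connected (\<Union>K)" "pl_extension K f"
  shows "merge_tree_space (\<Union>K) f"
  unfolding merge_tree_space_def
  using assms compact_simplicial_complex continuous_on_pl_extension closed_sublevel_diff_component
  by blast

theorem corollary1:
  fixes K :: "'a::euclidean_space set set"
    and f g :: "'a \<Rightarrow> real" and p :: "'a \<Rightarrow> real" and q :: real
  assumes "simplicial_complex K"
    and "connected (\<Union>K)"
    and "1 \<le> q"
    and "pl_extension K f" and "pl_extension K g"
    and "prob_dist (cplx_vertices K) p"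
    and "balanced (cplx_vertices K) p"
  shows "gw_dist q (cplx_vertices K) p (sp_matrix (\<Union>K) f) (cplx_vertices K) p (sp_matrix (\<Union>K) g)
    \<le> (real (card (cplx_vertices K)) powr (2 / q) + 2) * Lq_norm q (cplx_vertices K) p (\<lambda>v. f v - g v)"
proof -
  let ?V = "cplx_vertices K"
  have fin: "finite ?V" using finite_cplx_vertices[OF assms(1)] .
  have "?V \<noteq> {}" using assms(6) by (auto simp: prob_dist_def)
  then have "Max ((\<lambda>v. \<bar>f v - g v\<bar>) ` ?V) \<in> (\<lambda>v. \<bar>f v - g v\<bar>) ` ?V" using fin by (intro Max_in) auto
  then obtain u where u: "u \<in> ?V" and u_eq: "Max ((\<lambda>v. \<bar>f v - g v\<bar>) ` ?V) = \<bar>f u - g u\<bar>"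
    by (rule imageE)
  have u_max: "\<bar>f v - g v\<bar> \<le> \<bar>f u - g u\<bar>" if "v \<in> ?V" for v
    unfolding u_eq[symmetric] using fin that by (intro Max_ge finite_imageI imageI)
  have bound: "\<bar>f x - g x\<bar> \<le> \<bar>f u - g u\<bar>" if "x \<in> \<Union>K" for x
    using pl_extension_diff_le_vertex_bound[OF assms(1,4,5) u_max that] .
  have "\<bar>sp_matrix (\<Union>K) f i k - sp_matrix (\<Union>K) g i k\<bar>
      \<le> 2 * \<bar>f u - g u\<bar> + \<bar>f i - g i\<bar> + \<bar>f k - g k\<bar>" if "i \<in> ?V" "k \<in> ?V" for i k
    using sp_matrix_diff_le[OF merge_tree_space_pl_extension[OF assms(1,2,4)]
        merge_tree_space_pl_extension[OF assms(1,2,5)] _ _ bound] that cplx_vertices_subset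
    by blast
  then show ?thesis
    by (rule gw_dist_le_of_distortion_bound[OF fin assms(6,7,3) u])
qed

end
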